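(* Let $n\ge1$, $k\ge1$ and take weights $a_j=1/j$. Then \[ \mathbb E(S_{n,k})=\frac{1}{\zeta^\star_n(\{1\}_k)}\sum_{\ell=0}^{k-2}H_n^{(\ell+2)}\,\zeta^\star_n(\{1\}_{k-\ell-2}) \] (the sum being empty, hence $0$, for $k=1$).
   Context: For $\vec\ell=(\ell_1,\dots,\ell_k)$ with $n\ge\ell_1\ge\cdots\ge\ell_k\ge1$ let $\sigma(\vec\ell)=|\{1\le j\le k-1:\ell_j=\ell_{j+1}\}|$. With $a_j=1/j$, $\theta_{n;k}(t)=\zeta^t_n(\{1\}_k)=\sum_{n\ge\ell_1\ge\cdots\ge\ell_k\ge1}t^{\sigma(\vec\ell)}\prod_i\ell_i^{-1}$, and $S_{n,k}$ is the random variable with $\mathbb P\{S_{n,k}=j\}=[t^j]\theta_{n;k}(t)/\theta_{n;k}(1)$. $\zeta^\star_n(\{1\}_k)=\theta_{n;k}(1)$, with $\zeta^\star_n(\{1\}_0)=1$; $H_n^{(i)}=\sum_{m=1}^nm^{-i}$. *)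

theory Defs
  imports Complex_Main "HOL-Computational_Algebra.Polynomial"
begin

definition tuples :: "nat \<Rightarrow> nat \<Rightarrow> nat list set" where
  "tuples n k = {l. length l = k \<and> set l \<subseteq> {1..n} \<and> sorted_wrt (\<ge>) l}"

text \<open>sigma(l) = number of 1 \<le> j \<le> k-1 with l_j = l_(j+1) (0-based indices here).\<close>
definition sigma :: "nat list \<Rightarrow> nat" where
  "sigma l = card {j. Suc j < length l \<and> l ! j = l ! Suc j}"

definition weight :: "nat list \<Rightarrow> real" where
  "weight l = (\<Prod>i<length l. 1 / real (l ! i))"

definition theta :: "nat \<Rightarrow> nat \<Rightarrow> real poly" where
  "theta n k = (\<Sum>l\<in>tuples n k. monom (weight l) (sigma l))"

definition zeta_star :: "nat \<Rightarrow> nat \<Rightarrow> real" where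
  "zeta_star n k = poly (theta n k) 1"

definition prob_S :: "nat \<Rightarrow> nat \<Rightarrow> nat \<Rightarrow> real" where
  "prob_S n k j = coeff (theta n k) j / poly (theta n k) 1"

text \<open>E(S_{n,k}); S_{n,k} takes values in {0..k-1} \<subseteq> {0..degree}, so summing over
  j \<le> degree(theta) covers the full support.\<close>
definition expect_S :: "nat \<Rightarrow> nat \<Rightarrow> real" where
  "expect_S n k = (\<Sum>j\<le>degree (theta n k). real j * prob_S n k j)"

definition harm :: "nat \<Rightarrow> nat \<Rightarrow> real" where
  "harm i n = (\<Sum>m=1..n. 1 / real m ^ i)"

end

theory Submission imports Defs begin

text \<open>
  Write Z n k for zeta_star n k and D n k for the sum of sigma(l) * weight(l) over the
  tuples, i.e. theta'(1), so that E(S(n,k)) = D n k / Z n k. Splitting the tuples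
  according to whether their largest entry equals n gives the recurrences
    Z n (k+1) = Z n k / n + Z (n-1) (k+1),
    D n (k+2) = D n (k+1) / n + Z n k / n^2 + D (n-1) (k+2),
  the middle term counting the new coincidence l1 = l2 = n. Iterating the first one gives
  Z n k = sum_i Z (n-1) (k-i) / n^i; together with H_n^(i) = H_(n-1)^(i) + 1/n^i this shows
  that sum_l H_n^(l+2) Z n (k-l-2) satisfies the same recurrence and initial values as D.
\<close>

lemma finite_tuples: "finite (tuples n k)"
  unfolding tuples_def
  by (rule finite_subset[OF _ finite_lists_length_eq[OF finite_atLeastAtMost[of 1 n], of k]]) auto

lemma tuples_0: "tuples n 0 = {[]}"
  unfolding tuples_def by auto

lemma tuples_0_Suc: "tuples 0 (Suc k) = {}"
  unfolding tuples_def by (auto simp: length_Suc_conv)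

lemma tuples_Suc_Suc:
  "tuples (Suc m) (Suc k) = Cons (Suc m) ` tuples (Suc m) k \<union> tuples m (Suc k)"
proof (rule set_eqI)
  fix l
  show "l \<in> tuples (Suc m) (Suc k) \<longleftrightarrow> l \<in> Cons (Suc m) ` tuples (Suc m) k \<union> tuples m (Suc k)"
  proof
    assume "l \<in> tuples (Suc m) (Suc k)"
    then obtain a l' where l: "l = a # l'" "length l' = k" "a \<in> {1..Suc m}"
      "set l' \<subseteq> {1..Suc m}" "\<forall>x\<in>set l'. x \<le> a" "sorted_wrt (\<ge>) l'"
      unfolding tuples_def by (auto simp: length_Suc_conv)
    show "l \<in> Cons (Suc m) ` tuples (Suc m) k \<union> tuples m (Suc k)"
    proof (cases "a = Suc m")
      case True
      then show ?thesis using l unfolding tuples_def by auto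
    next
      case False
      then have "a \<le> m" using l by auto
      then have "set l' \<subseteq> {1..m}" using l by force
      then show ?thesis using l \<open>a \<le> m\<close> unfolding tuples_def by auto
    qed
  next
    assume "l \<in> Cons (Suc m) ` tuples (Suc m) k \<union> tuples m (Suc k)"
    then show "l \<in> tuples (Suc m) (Suc k)" unfolding tuples_def by (auto; force)
  qed
qed

lemma sum_tuples_Suc_Suc:
  fixes f :: "nat list \<Rightarrow> real"
  shows "(\<Sum>l\<in>tuples (Suc m) (Suc k). f l) =
    (\<Sum>l\<in>tuples (Suc m) k. f (Suc m # l)) + (\<Sum>l\<in>tuples m (Suc k). f l)"
proof -
  have "Cons (Suc m) ` tuples (Suc m) k \<inter> tuples m (Suc k) = {}"
    unfolding tuples_def by auto
  then show ?thesis
    unfolding tuples_Suc_Suc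
    by (subst sum.union_disjoint) (auto simp: finite_tuples sum.reindex)
qed

lemma sigma_Cons: "sigma (a # l) = sigma l + (if l \<noteq> [] \<and> hd l = a then 1 else 0)"
proof -
  have "{j. Suc j < length (a # l) \<and> (a # l) ! j = (a # l) ! Suc j} =
        (if l \<noteq> [] \<and> hd l = a then {0} else {}) \<union> Suc ` {j. Suc j < length l \<and> l ! j = l ! Suc j}"
    by (rule set_eqI, case_tac x) (auto simp: hd_conv_nth)
  moreover have "finite {j. Suc j < length l \<and> l ! j = l ! Suc j}"
    by (rule finite_subset[of _ "{..<length l}"]) auto
  ultimately show ?thesis
    unfolding sigma_def by (auto simp: card_image)
qed

lemma sigma_le_length: "sigma l \<le> length l"
proof -
  have "{j. Suc j < length l \<and> l ! j = l ! Suc j} \<subseteq> {..<length l}" by auto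
  from card_mono[OF _ this] show ?thesis unfolding sigma_def by auto
qed

lemma weight_Cons: "weight (a # l) = weight l / real a"
  unfolding weight_def length_Cons prod.lessThan_Suc_shift by simp

lemma harm_0 [simp]: "harm i 0 = 0"
  unfolding harm_def by simp

lemma harm_Suc: "harm i (Suc m) = harm i m + 1 / real (Suc m) ^ i"
  unfolding harm_def by simp

lemma zeta_star_eq_sum_weight: "zeta_star n k = (\<Sum>l\<in>tuples n k. weight l)"
  unfolding zeta_star_def theta_def poly_sum poly_monom by simp

lemma zeta_star_0 [simp]: "zeta_star n 0 = 1"
  by (simp add: zeta_star_eq_sum_weight tuples_0 weight_def)

lemma zeta_star_Suc_Suc:
  "zeta_star (Suc m) (Suc k) = zeta_star (Suc m) k / real (Suc m) + zeta_star m (Suc k)"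
  unfolding zeta_star_eq_sum_weight sum_tuples_Suc_Suc weight_Cons
  by (simp add: sum_divide_distrib)

lemma zeta_star_Suc_convolution:
  "zeta_star (Suc m) j = (\<Sum>i\<le>j. zeta_star m (j - i) / real (Suc m) ^ i)"
proof (induction j)
  case 0
  then show ?case by simp
next
  case (Suc j)
  have "(\<Sum>i\<le>Suc j. zeta_star m (Suc j - i) / real (Suc m) ^ i) =
        zeta_star m (Suc j) + (\<Sum>i\<le>j. zeta_star m (j - i) / real (Suc m) ^ Suc i)"
    by (subst sum.atMost_Suc_shift) simp
  also have "\<dots> = zeta_star m (Suc j) + zeta_star (Suc m) j / real (Suc m)"
    unfolding Suc.IH sum_divide_distrib by (simp add: field_simps)
  finally show ?case using zeta_star_Suc_Suc by simp
qed

definition sigma_weight_sum :: "nat \<Rightarrow> nat \<Rightarrow> real" where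
  "sigma_weight_sum n k = (\<Sum>l\<in>tuples n k. real (sigma l) * weight l)"

lemma expect_S_eq: "expect_S n k = sigma_weight_sum n k / zeta_star n k"
proof -
  define N where "N = max (degree (theta n k)) k"
  have "(\<Sum>j\<le>degree (theta n k). real j * coeff (theta n k) j) =
        (\<Sum>j\<le>N. real j * coeff (theta n k) j)"
    by (rule sum.mono_neutral_left) (auto simp: N_def coeff_eq_0)
  also have "\<dots> = (\<Sum>j\<le>N. \<Sum>l\<in>tuples n k. if sigma l = j then real j * weight l else 0)"
    unfolding theta_def coeff_sum sum_distrib_left by (intro sum.cong refl) auto
  also have "\<dots> = (\<Sum>l\<in>tuples n k. \<Sum>j\<le>N. if sigma l = j then real j * weight l else 0)"
    by (rule sum.swap)
  also have "\<dots> = sigma_weight_sum n k"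
    unfolding sigma_weight_sum_def
  proof (intro sum.cong refl)
    fix l assume "l \<in> tuples n k"
    then have "sigma l \<le> N" using sigma_le_length[of l] by (auto simp: tuples_def N_def)
    then show "(\<Sum>j\<le>N. if sigma l = j then real j * weight l else 0) = real (sigma l) * weight l"
      by (simp add: sum.delta)
  qed
  finally show ?thesis
    unfolding expect_S_def prob_S_def zeta_star_def times_divide_eq_right
    by (simp add: sum_divide_distrib[symmetric])
qed

lemma sigma_weight_sum_0: "sigma_weight_sum n 0 = 0"
  by (simp add: sigma_weight_sum_def tuples_0 sigma_def)

lemma sigma_weight_sum_Suc_0: "sigma_weight_sum n (Suc 0) = 0"
proof -
  have "\<forall>l\<in>tuples n (Suc 0). sigma l = 0"
    by (auto simp: tuples_def sigma_def length_Suc_conv)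
  then show ?thesis by (simp add: sigma_weight_sum_def)
qed

lemma sum_tuples_hd_eq:
  "(\<Sum>l\<in>tuples (Suc m) (Suc k). if l \<noteq> [] \<and> hd l = Suc m then weight l else 0) =
    zeta_star (Suc m) k / real (Suc m)"
proof -
  have "(\<Sum>l\<in>tuples m (Suc k). if l \<noteq> [] \<and> hd l = Suc m then weight l else 0) = 0"
    by (rule sum.neutral) (auto simp: tuples_def neq_Nil_conv)
  then show ?thesis
    unfolding sum_tuples_Suc_Suc zeta_star_eq_sum_weight
    by (simp add: weight_Cons sum_divide_distrib)
qed

lemma sigma_weight_sum_Suc_Suc:
  "sigma_weight_sum (Suc m) (Suc (Suc k)) =
    sigma_weight_sum (Suc m) (Suc k) / real (Suc m) + zeta_star (Suc m) k / real (Suc m)^2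
    + sigma_weight_sum m (Suc (Suc k))"
proof -
  have "sigma_weight_sum (Suc m) (Suc (Suc k)) =
      (\<Sum>l\<in>tuples (Suc m) (Suc k).
        (real (sigma l) * weight l + (if l \<noteq> [] \<and> hd l = Suc m then weight l else 0)) / real (Suc m))
      + sigma_weight_sum m (Suc (Suc k))"
    unfolding sigma_weight_sum_def sum_tuples_Suc_Suc[of _ m "Suc k"] sigma_Cons weight_Cons
    by (intro arg_cong2[where f="(+)"] sum.cong) (auto simp: field_simps)
  then show ?thesis
    unfolding add_divide_distrib sum.distrib sum_divide_distrib[symmetric] sum_tuples_hd_eq
    by (simp add: sigma_weight_sum_def power2_eq_square)
qed

definition harm_zeta_convolution :: "nat \<Rightarrow> nat \<Rightarrow> real" where
  "harm_zeta_convolution n k = (\<Sum>i<k-1. harm (i+2) n * zeta_star n (k - i - 2))"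

lemma harm_zeta_convolution_Suc_Suc:
  "harm_zeta_convolution (Suc m) (Suc (Suc k)) =
    harm_zeta_convolution (Suc m) (Suc k) / real (Suc m) + zeta_star (Suc m) k / real (Suc m)^2
    + harm_zeta_convolution m (Suc (Suc k))"
proof -
  let ?h = "\<lambda>i. harm (i+2) (Suc m)"
  have Z: "zeta_star (Suc m) (k - i) =
      (if i < k then zeta_star (Suc m) (k - i - 1) / real (Suc m) else 0) + zeta_star m (k - i)"
    if "i \<le> k" for i
    using that zeta_star_Suc_Suc[of m "k - i - 1"] by (cases "i < k") (auto simp: Suc_diff_Suc)
  have "harm_zeta_convolution (Suc m) (Suc (Suc k)) = (\<Sum>i<Suc k. ?h i * zeta_star (Suc m) (k - i))"
    unfolding harm_zeta_convolution_def by simp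
  also have "\<dots> =
      (\<Sum>i<Suc k. ?h i * (if i < k then zeta_star (Suc m) (k - i - 1) / real (Suc m) else 0))
      + (\<Sum>i<Suc k. ?h i * zeta_star m (k - i))"
    unfolding sum.distrib[symmetric] by (intro sum.cong refl) (simp add: Z distrib_left)
  also have "(\<Sum>i<Suc k. ?h i * (if i < k then zeta_star (Suc m) (k - i - 1) / real (Suc m) else 0)) =
      harm_zeta_convolution (Suc m) (Suc k) / real (Suc m)"
    unfolding harm_zeta_convolution_def sum_divide_distrib by (simp add: Suc_diff_Suc)
  also have "(\<Sum>i<Suc k. ?h i * zeta_star m (k - i)) =
      harm_zeta_convolution m (Suc (Suc k)) + (\<Sum>i<Suc k. zeta_star m (k - i) / real (Suc m) ^ (i+2))"
    unfolding harm_zeta_convolution_def harm_Suc by (simp add: sum.distrib distrib_right)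
  also have "(\<Sum>i<Suc k. zeta_star m (k - i) / real (Suc m) ^ (i+2)) = zeta_star (Suc m) k / real (Suc m)^2"
    unfolding zeta_star_Suc_convolution sum_divide_distrib lessThan_Suc_atMost
    by (intro sum.cong refl) (simp add: power_add power2_eq_square)
  finally show ?thesis by simp
qed

lemma sigma_weight_sum_eq_harm_zeta_convolution:
  "sigma_weight_sum n k = harm_zeta_convolution n k"
proof (induction n arbitrary: k)
  case 0
  then show ?case
    by (cases k) (simp_all add: sigma_weight_sum_def harm_zeta_convolution_def tuples_0 tuples_0_Suc sigma_def)
next
  case (Suc m)
  note IH_m = Suc.IH
  show ?case
  proof (induction k)
    case 0
    then show ?case by (simp add: sigma_weight_sum_0 harm_zeta_convolution_def)
  next
    case (Suc k)
    show ?case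
    proof (cases k)
      case 0
      then show ?thesis by (simp add: sigma_weight_sum_Suc_0 harm_zeta_convolution_def)
    next
      case (Suc k')
      then show ?thesis
        using \<open>sigma_weight_sum (Suc m) k = harm_zeta_convolution (Suc m) k\<close> IH_m
        by (simp add: sigma_weight_sum_Suc_Suc harm_zeta_convolution_Suc_Suc)
    qed
  qed
qed

theorem mainTheorem13:
  fixes n k :: nat
  assumes "n \<ge> 1" and "k \<ge> 1"
  shows "expect_S n k =
    (1 / zeta_star n k) * (\<Sum>l=0..<k-1. harm (l+2) n * zeta_star n (k - l - 2))"
  using expect_S_eq sigma_weight_sum_eq_harm_zeta_convolution
  by (simp add: harm_zeta_convolution_def atLeast0LessThan)

end
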